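(* Let $n\in\mathbb{N}$, $p_1,\ldots,p_n\in\mathbb{H}$ with $p_n\neq0$, $d_0\in\{0,1\}$, and $p(x)=p_nx^n+\cdots+p_1x+d_0$. For a real variable $t$, write $p(t)=g(t)\big(g_1(t)+g_2(t)\mathbf{j}\big)$ with $g,g_1,g_2\in\mathbb{C}[t]$ and $\gcd(g_1,g_2)=1$, and let $\tilde g(t)=g_1(t)\bar g_1(t)+g_2(t)\bar g_2(t)$, where $\bar h$ denotes the polynomial obtained from $h\in\mathbb{C}[t]$ by conjugating its coefficients. Write the set of distinct complex roots of $g$ as $$\{\xi_1,\ldots,\xi_s;\ \lambda_1,\overline{\lambda_1},\ldots,\lambda_t,\overline{\lambda_t};\ \eta_1,\ldots,\eta_{k_1}\},$$ where $\xi_1,\ldots,\xi_s$ are real, the $\lambda_i,\overline{\lambda_i}$ are the nonreal roots of $g$ whose conjugates are also roots of $g$, and $\eta_1,\ldots,\eta_{k_1}$ are the remaining (nonreal) roots of $g$. Write the set of distinct complex roots of $\tilde g$ as $\{\eta_{k_1+1},\overline{\eta_{k_1+1}},\ldots,\eta_k,\overline{\eta_k}\}$, where from this list one deletes each pair $\eta_i,\overline{\eta_i}$ for which $\eta_i$ or $\overline{\eta_i}$ is a root of $g$ (so that after deletion $\eta_1,\ldots,\eta_k,\overline{\eta_{k_1+1}},\ldots,\overline{\eta_k},\lambda_1,\overline{\lambda_1},\ldots,\lambda_t,\overline{\lambda_t}$ are distinct nonreal complex numbers). Then the set of zeros of $p(x)$ in $\mathbb{H}$ is $$\{\xi_1,\ldots,\xi_s;\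 \omega_1,\ldots,\omega_k\}\ \dot\cup\ \dot{\bigcup_{i=1}^{t}}[\lambda_i],$$ where $$\omega_i=\frac{1}{|g_1(\overline{\eta_i})|^2+|g_2(\overline{\eta_i})|^2}\Big\{|g_2(\overline{\eta_i})|^2\overline{\eta_i}+|g_1(\overline{\eta_i})|^2\eta_i+2g_2(\overline{\eta_i})\overline{g_1(\overline{\eta_i})}(\operatorname{Im}\eta_i)\mathbf{k}\Big\}.$$
   Context: $\mathbb{H}$ denotes the real quaternions with units $\mathbf{i},\mathbf{j},\mathbf{k}$ ($\mathbf{i}^2=\mathbf{j}^2=\mathbf{k}^2=-1$, $\mathbf{ij}=-\mathbf{ji}=\mathbf{k}$), and $\mathbb{C}=\mathbb{R}\oplus\mathbb{R}\mathbf{i}\subset\mathbb{H}$. Evaluating $p$ at a real $t$ and writing each coefficient $p_i=a_i+b_i\mathbf{j}$ ($a_i,b_i\in\mathbb{C}$) gives $p(t)=f_1(t)+f_2(t)\mathbf{j}$ with $f_1,f_2\in\mathbb{C}[t]$; the factorization $p(t)=g(t)(g_1(t)+g_2(t)\mathbf{j})$ means $f_1=gg_1$, $f_2=gg_2$. For $q\in\mathbb{H}$, $[q]=\{aqa^{-1}:a\in\mathbb{H},a\neq0\}$. $|z|$ and $\operatorname{Im}z$ denote modulus and imaginary part of $z\in\mathbb{C}$. *)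

theory Defs
  imports "HOL-Computational_Algebra.Polynomial_Factorial" "HOL-Computational_Algebra.Field_as_Ring" Complex_Main
begin

datatype quat = Quat (qr: real) (qi: real) (qj: real) (qk: real)

lemma quat_eqI: "qr a = qr b \<Longrightarrow> qi a = qi b \<Longrightarrow> qj a = qj b \<Longrightarrow> qk a = qk b \<Longrightarrow> a = b"
  by (cases a, cases b) simp

instantiation quat :: ring_1
begin

definition "0 = Quat 0 0 0 0"
definition "1 = Quat 1 0 0 0"
definition "a + b = Quat (qr a + qr b) (qi a + qi b) (qj a + qj b) (qk a + qk b)"
definition "a - b = Quat (qr a - qr b) (qi a - qi b) (qj a - qj b) (qk a - qk b)"
definition "- a = Quat (- qr a) (- qi a) (- qj a) (- qk a)"
definition "a * b = Quat
   (qr a * qr b - qi a * qi b - qj a * qj b - qk a * qk b)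
   (qr a * qi b + qi a * qr b + qj a * qk b - qk a * qj b)
   (qr a * qj b - qi a * qk b + qj a * qr b + qk a * qi b)
   (qr a * qk b + qi a * qj b - qj a * qi b + qk a * qr b)"

instance
  by intro_classes
     (auto intro!: quat_eqI
       simp: zero_quat_def one_quat_def plus_quat_def minus_quat_def uminus_quat_def
             times_quat_def algebra_simps)

end

instantiation quat :: inverse
begin

definition "inverse a = (let m = (qr a)\<^sup>2 + (qi a)\<^sup>2 + (qj a)\<^sup>2 + (qk a)\<^sup>2 in
   Quat (qr a / m) (- qi a / m) (- qj a / m) (- qk a / m))"
definition "divide a b = a * inverse (b :: quat)"

instance ..

end

definition quat_i :: quat where "quat_i = Quat 0 1 0 0"
definition quat_j :: quat where "quat_j = Quat 0 0 1 0"
definition quat_k :: quat where "quat_k = Quat 0 0 0 1"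

definition of_cplx :: "complex \<Rightarrow> quat" where
  "of_cplx z = Quat (Re z) (Im z) 0 0"

text \<open>Writing q = a + b j with a, b complex: a = qfst q, b = qsnd q
  (indeed (x + y i) j = x j + y k).\<close>

definition qfst :: "quat \<Rightarrow> complex" where "qfst q = Complex (qr q) (qi q)"
definition qsnd :: "quat \<Rightarrow> complex" where "qsnd q = Complex (qj q) (qk q)"

definition qclass :: "quat \<Rightarrow> quat set" where
  "qclass q = {a * q * inverse a | a. a \<noteq> 0}"

definition pconj :: "complex poly \<Rightarrow> complex poly" where
  "pconj h = map_poly cnj h"

definition omega :: "complex poly \<Rightarrow> complex poly \<Rightarrow> complex \<Rightarrow> quat" where
  "omega g1 g2 \<eta> =
     (let a = poly g1 (cnj \<eta>); b = poly g2 (cnj \<eta>);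
          D = (cmod b)\<^sup>2 + (cmod a)\<^sup>2
      in of_cplx (complex_of_real (1 / D)) *
           (of_cplx (complex_of_real ((cmod b)\<^sup>2) * cnj \<eta> + complex_of_real ((cmod a)\<^sup>2) * \<eta>)
            + of_cplx (2 * b * cnj a * complex_of_real (Im \<eta>)) * quat_k))"

end

theory Submission
  imports Defs
begin

text \<open>Every quaternion is similar to a complex number z, and similarity preserves the real part
  and the norm, so the class [z] meets \<complex> exactly in {z, cnj z}. For a = c + d j one computes
  p(a z a^-1) = (c (g g1)(z) - cnj d (g g2)(z) + (d (g g1)(cnj z) + cnj c (g g2)(cnj z)) j) a^-1.
  For real z this vanishes iff g(z) = 0, and if g vanishes at z and cnj z the whole class [z]
  consists of zeros. Otherwise, say g(cnj z) \<noteq> 0, the j-component forces (c, d) to be a complex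
  multiple of (cnj (g1 (cnj z)), - g2 (cnj z)); this pins the zero down to the single quaternion
  \<omega>(z), and the other component then reads g(z) gtilde(z) = 0.\<close>

instance quat :: division_ring
proof
  fix a :: quat
  assume "a \<noteq> 0"
  then obtain r s t u where a: "a = Quat r s t u" and "r\<^sup>2 + s\<^sup>2 + t\<^sup>2 + u\<^sup>2 \<noteq> 0"
    by (cases a) (auto simp: zero_quat_def add_nonneg_eq_0_iff)
  then have "r*r/m + s*s/m + t*t/m + u*u/m = 1" if "m = r\<^sup>2 + s\<^sup>2 + t\<^sup>2 + u\<^sup>2" for m
    by (simp add: that add_divide_distrib[symmetric] power2_eq_square)
  then show "inverse a * a = 1" "a * inverse a = 1"
    by (simp_all add: a inverse_quat_def times_quat_def one_quat_def Let_def algebra_simps)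
next
  show "inverse 0 = (0 :: quat)" by (simp add: inverse_quat_def zero_quat_def)
qed (simp add: divide_quat_def)

definition cquat :: "complex \<Rightarrow> complex \<Rightarrow> quat" where
  "cquat u v = Quat (Re u) (Im u) (Re v) (Im v)"

lemma cquat_mult: "cquat u v * cquat u' v' = cquat (u * u' - v * cnj v') (u * v' + v * cnj u')"
  by (simp add: cquat_def times_quat_def algebra_simps)

lemma cquat_add: "cquat u v + cquat u' v' = cquat (u + u') (v + v')"
  by (simp add: cquat_def plus_quat_def)

lemma cquat_eq_iff: "cquat u v = cquat u' v' \<longleftrightarrow> u = u' \<and> v = v'"
  by (auto simp: cquat_def complex_eq_iff)

lemma cquat_0_0: "cquat 0 0 = 0"
  by (simp add: cquat_def zero_quat_def)

lemma cquat_eq_0_iff: "cquat u v = 0 \<longleftrightarrow> u = 0 \<and> v = 0"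
  by (metis cquat_0_0 cquat_eq_iff)

lemma cquat_qfst_qsnd: "cquat (qfst q) (qsnd q) = q"
  by (cases q) (simp add: cquat_def qfst_def qsnd_def)

lemma qfst_cquat [simp]: "qfst (cquat u v) = u"
  and qsnd_cquat [simp]: "qsnd (cquat u v) = v"
  by (simp_all add: cquat_def qfst_def qsnd_def)

lemma qfst_1 [simp]: "qfst 1 = 1"
  and qsnd_1 [simp]: "qsnd 1 = 0"
  by (simp_all add: qfst_def qsnd_def one_quat_def complex_eq_iff)

lemma of_cplx_eq_cquat: "of_cplx z = cquat z 0"
  by (simp add: cquat_def of_cplx_def)

lemma quat_j_eq_cquat: "quat_j = cquat 0 1"
  by (simp add: cquat_def quat_j_def)

lemma quat_k_eq_cquat: "quat_k = cquat 0 \<i>"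
  by (simp add: cquat_def quat_k_def)

lemma sum_cquat: "(\<Sum>i\<in>I. cquat (u i) (v i)) = cquat (\<Sum>i\<in>I. u i) (\<Sum>i\<in>I. v i)"
  by (induction I rule: infinite_finite_induct) (simp_all add: cquat_0_0 cquat_add)

lemma of_cplx_mult: "of_cplx (z * w) = of_cplx z * of_cplx w"
  by (simp add: of_cplx_eq_cquat cquat_mult)

lemma of_cplx_power: "of_cplx (z ^ k) = of_cplx z ^ k"
  by (induction k) (simp_all add: of_cplx_mult, simp add: of_cplx_def one_quat_def)

lemma of_cplx_mult_commute: "of_cplx z * of_cplx w = of_cplx w * of_cplx z"
  by (metis of_cplx_mult mult.commute)

lemma of_cplx_of_real_mult_commute: "of_cplx (of_real r) * q = q * of_cplx (of_real r)"
  by (simp add: of_cplx_def times_quat_def)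

lemma of_cplx_mult_quat_j: "of_cplx z * quat_j = quat_j * of_cplx (cnj z)"
  by (simp add: of_cplx_eq_cquat quat_j_eq_cquat cquat_mult)

lemma power_similar: "(a::'a::division_ring) \<noteq> 0 \<Longrightarrow> (a * q * inverse a) ^ k = a * q ^ k * inverse a"
  by (induction k) (simp_all add: mult.assoc, simp add: mult.assoc[symmetric])

lemma sum_mult_power_similar_of_cplx:
  fixes c :: "nat \<Rightarrow> quat"
  assumes "a \<noteq> 0"
  shows "(\<Sum>i\<in>I. c i * (a * of_cplx z * inverse a) ^ i) =
    cquat (qfst a * (\<Sum>i\<in>I. qfst (c i) * z ^ i) - cnj (qsnd a) * (\<Sum>i\<in>I. qsnd (c i) * z ^ i))
          (qsnd a * (\<Sum>i\<in>I. qfst (c i) * cnj z ^ i) + cnj (qfst a) * (\<Sum>i\<in>I. qsnd (c i) * cnj z ^ i))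
    * inverse a"
proof -
  have "c i * a * of_cplx (z ^ i) = cquat ((qfst (c i) * qfst a - qsnd (c i) * cnj (qsnd a)) * z ^ i)
      ((qfst (c i) * qsnd a + qsnd (c i) * cnj (qfst a)) * cnj z ^ i)" for i
    by (subst (1 2) cquat_qfst_qsnd[symmetric]) (simp add: of_cplx_eq_cquat cquat_mult)
  moreover have "c i * (a * of_cplx z * inverse a) ^ i = c i * a * of_cplx (z ^ i) * inverse a" for i
    by (metis power_similar[OF assms] of_cplx_power mult.assoc)
  ultimately have "c i * (a * of_cplx z * inverse a) ^ i = cquat ((qfst (c i) * qfst a - qsnd (c i) * cnj (qsnd a)) * z ^ i)
      ((qfst (c i) * qsnd a + qsnd (c i) * cnj (qfst a)) * cnj z ^ i) * inverse a" for i
    by simp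
  then show ?thesis
    by (simp add: sum_distrib_right[symmetric] sum_cquat sum_distrib_left sum_subtractf
        sum.distrib algebra_simps)
qed

definition qnorm2 :: "quat \<Rightarrow> real" where
  "qnorm2 q = (qr q)\<^sup>2 + (qi q)\<^sup>2 + (qj q)\<^sup>2 + (qk q)\<^sup>2"

lemma qnorm2_mult: "qnorm2 (a * b) = qnorm2 a * qnorm2 b"
  by (simp add: qnorm2_def times_quat_def power2_eq_square algebra_simps)

lemma qnorm2_1: "qnorm2 1 = 1"
  by (simp add: qnorm2_def one_quat_def)

lemma qr_mult_commute: "qr (a * b) = qr (b * a)"
  by (simp add: times_quat_def algebra_simps)

lemma mem_qclass_iff: "x \<in> qclass q \<longleftrightarrow> (\<exists>a. a \<noteq> 0 \<and> x = a * q * inverse a)"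
  by (auto simp: qclass_def)

lemma self_mem_qclass: "q \<in> qclass q"
  by (auto simp: mem_qclass_iff intro: exI[of _ 1])

lemma qclass_invariants:
  assumes "x \<in> qclass q"
  shows "qr x = qr q" "qnorm2 x = qnorm2 q"
proof -
  obtain a where a: "a \<noteq> 0" and x: "x = a * q * inverse a"
    using assms by (auto simp: mem_qclass_iff)
  show "qr x = qr q"
    using a by (simp add: x qr_mult_commute[of "a * q"] mult.assoc[symmetric])
  have "qnorm2 a * qnorm2 (inverse a) = 1"
    using a by (metis qnorm2_mult right_inverse qnorm2_1)
  then show "qnorm2 x = qnorm2 q"
    by (simp add: x qnorm2_mult)
qed

lemma qclass_of_cplx_meet:
  assumes "qclass (of_cplx l) \<inter> qclass (of_cplx m) \<noteq> {}"
  shows "m = l \<or> m = cnj l"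
proof -
  obtain x where "x \<in> qclass (of_cplx l)" "x \<in> qclass (of_cplx m)"
    using assms by blast
  then have "qr (of_cplx m) = qr (of_cplx l)" "qnorm2 (of_cplx m) = qnorm2 (of_cplx l)"
    by (metis qclass_invariants(1), metis qclass_invariants(2))
  then have "Re m = Re l" "(Im m)\<^sup>2 = (Im l)\<^sup>2"
    by (simp_all add: of_cplx_def qnorm2_def)
  then show ?thesis
    by (auto simp: complex_eq_iff power2_eq_iff)
qed

lemma qclass_of_real: "qclass (of_cplx (of_real r)) = {of_cplx (of_real r)}"
proof -
  have "a * of_cplx (of_real r) * inverse a = of_cplx (of_real r)" if "a \<noteq> 0" for a
    using that by (metis of_cplx_of_real_mult_commute mult.assoc right_inverse mult_1_right)
  then show ?thesis
    using self_mem_qclass by (auto simp: mem_qclass_iff)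
qed

lemma qclass_of_cplx_cnj: "qclass (of_cplx (cnj z)) = qclass (of_cplx z)"
proof -
  have "qclass (of_cplx (cnj w)) \<subseteq> qclass (of_cplx w)" for w
  proof
    fix x assume "x \<in> qclass (of_cplx (cnj w))"
    then obtain a where "a \<noteq> 0" "x = a * of_cplx (cnj w) * inverse a"
      by (auto simp: mem_qclass_iff)
    moreover have "quat_j \<noteq> 0"
      by (simp add: quat_j_def zero_quat_def)
    then have "inverse quat_j * of_cplx w * quat_j = of_cplx (cnj w)"
      by (metis of_cplx_mult_quat_j mult.assoc left_inverse mult_1_left)
    moreover have "inverse (a * inverse quat_j) = quat_j * inverse a"
      using \<open>a \<noteq> 0\<close> \<open>quat_j \<noteq> 0\<close> by (simp add: nonzero_inverse_mult_distrib)
    ultimately have "x = (a * inverse quat_j) * of_cplx w * inverse (a * inverse quat_j)"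
      by (metis mult.assoc)
    then show "x \<in> qclass (of_cplx w)"
      using \<open>a \<noteq> 0\<close> \<open>quat_j \<noteq> 0\<close> unfolding mem_qclass_iff
      by (intro exI[of _ "a * inverse quat_j"]) simp
  qed
  from this[of z] this[of "cnj z"] show ?thesis by simp
qed

lemma ex_qclass_of_cplx: "\<exists>z. x \<in> qclass (of_cplx z)"
proof (cases x)
  case (Quat r s t u)
  define b where "b = sqrt (s\<^sup>2 + t\<^sup>2 + u\<^sup>2)"
  have b2: "b * b = s * s + t * t + u * u"
    by (simp add: b_def power2_eq_square)
  show ?thesis
  proof (cases "b + s = 0 \<and> t = 0 \<and> u = 0")
    case True
    then have "x = of_cplx (Complex r s)"
      by (simp add: Quat of_cplx_def)
    then show ?thesis
      using self_mem_qclass by blast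
  next
    case False
    \<comment> \<open>conjugation by a turns i into the direction of the imaginary part (s, t, u) of x\<close>
    define a where "a = Quat (b + s) 0 (- u) t"
    have "a \<noteq> 0"
      using False by (auto simp: a_def zero_quat_def)
    moreover have "x * a = a * of_cplx (Complex r b)"
      by (rule quat_eqI) (simp_all add: Quat a_def of_cplx_def times_quat_def algebra_simps b2)
    then have "x = a * of_cplx (Complex r b) * inverse a"
      using \<open>a \<noteq> 0\<close> by (metis mult.assoc mult_1_right right_inverse)
    ultimately show ?thesis
      by (auto simp: mem_qclass_iff)
  qed
qed

definition omega_conjugator :: "complex poly \<Rightarrow> complex poly \<Rightarrow> complex \<Rightarrow> quat" where
  "omega_conjugator g1 g2 \<eta> = cquat (cnj (poly g1 (cnj \<eta>))) (- poly g2 (cnj \<eta>))"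

lemma omega_conjugator_eq_0_iff:
  "omega_conjugator g1 g2 \<eta> = 0 \<longleftrightarrow> poly g1 (cnj \<eta>) = 0 \<and> poly g2 (cnj \<eta>) = 0"
  by (simp add: omega_conjugator_def cquat_eq_0_iff)

lemma omega_mult_conjugator:
  "omega g1 g2 \<eta> * omega_conjugator g1 g2 \<eta> = omega_conjugator g1 g2 \<eta> * of_cplx \<eta>"
  if "omega_conjugator g1 g2 \<eta> \<noteq> 0"
proof -
  define A where "A = poly g1 (cnj \<eta>)"
  define B where "B = poly g2 (cnj \<eta>)"
  define D where "D = (cmod B)\<^sup>2 + (cmod A)\<^sup>2"
  define N where "N = complex_of_real ((cmod B)\<^sup>2) * cnj \<eta> + complex_of_real ((cmod A)\<^sup>2) * \<eta>"
  define M where "M = \<i> * (2 * B * cnj A * complex_of_real (Im \<eta>))"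
  have om: "omega g1 g2 \<eta> = cquat (N / complex_of_real D) (M / complex_of_real D)"
    unfolding omega_def Let_def A_def[symmetric] B_def[symmetric] D_def[symmetric] N_def[symmetric]
    by (simp add: of_cplx_eq_cquat quat_k_eq_cquat cquat_mult cquat_add cquat_eq_iff M_def field_simps)
  have "D \<noteq> 0"
    using that by (auto simp: D_def omega_conjugator_eq_0_iff A_def B_def)
  have D: "complex_of_real D = A * cnj A + B * cnj B"
    unfolding D_def of_real_add complex_norm_square by (simp add: add.commute)
  have cnj_\<eta>: "cnj \<eta> = \<eta> - 2 * \<i> * complex_of_real (Im \<eta>)"
    by (simp add: complex_eq_iff)
  have N: "N = B * cnj B * (\<eta> - 2 * \<i> * complex_of_real (Im \<eta>)) + A * cnj A * \<eta>"
    unfolding N_def complex_norm_square cnj_\<eta> ..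
  have "N * cnj A + M * cnj B = cnj A * \<eta> * complex_of_real D"
    unfolding N D M_def by (simp add: algebra_simps)
  moreover have "N * (- B) + M * A = - B * cnj \<eta> * complex_of_real D"
    unfolding N D M_def cnj_\<eta> by (simp add: algebra_simps)
  ultimately show ?thesis
    using \<open>D \<noteq> 0\<close>
    by (simp add: om omega_conjugator_def A_def[symmetric] B_def[symmetric] of_cplx_eq_cquat
        cquat_mult cquat_eq_iff field_simps)
qed

lemma omega_similar:
  assumes "omega_conjugator g1 g2 \<eta> \<noteq> 0"
  shows "omega g1 g2 \<eta> = omega_conjugator g1 g2 \<eta> * of_cplx \<eta> * inverse (omega_conjugator g1 g2 \<eta>)"
  using omega_mult_conjugator[OF assms] assms by (metis mult.assoc mult_1_right right_inverse)

lemma cquat_eq_conjugator_mult_of_cplx: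
  assumes "\<not> (A = 0 \<and> B = 0)" and "d * A + cnj c * B = 0"
  obtains \<mu> where "cquat c d = cquat (cnj A) (- B) * of_cplx \<mu>"
proof (cases "A = 0")
  case True
  with assms have "B \<noteq> 0" "c = 0"
    by auto
  then show ?thesis
    by (intro that[of "- cnj d / cnj B"]) (simp add: of_cplx_eq_cquat cquat_mult cquat_eq_iff True)
next
  case False
  then have "d = - B * cnj c / A"
    using assms(2) by (simp add: field_simps eq_neg_iff_add_eq_0)
  then show ?thesis
    using False by (intro that[of "c / cnj A"]) (simp add: of_cplx_eq_cquat cquat_mult cquat_eq_iff)
qed

lemma poly_pconj: "poly (pconj h) z = cnj (poly h (cnj z))"
  by (metis complex_cnj_cnj pconj_def poly_cnj)

lemma coprime_poly_no_common_root:
  fixes f h :: "'a::field_gcd poly"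
  assumes "gcd f h = 1" "poly f w = 0"
  shows "poly h w \<noteq> 0"
proof
  assume "poly h w = 0"
  then have "[:- w, 1:] dvd gcd f h"
    using assms(2) by (simp add: poly_eq_0_iff_dvd)
  then show False
    using assms(1) by (simp add: is_unit_iff_degree)
qed

definition gtilde :: "complex poly \<Rightarrow> complex poly \<Rightarrow> complex poly" where
  "gtilde g1 g2 = g1 * pconj g1 + g2 * pconj g2"

lemma poly_gtilde:
  "poly (gtilde g1 g2) z = poly g1 z * cnj (poly g1 (cnj z)) + poly g2 z * cnj (poly g2 (cnj z))"
  by (simp add: gtilde_def poly_pconj)

lemma poly_gtilde_real_eq_0_iff:
  assumes "Im z = 0"
  shows "poly (gtilde g1 g2) z = 0 \<longleftrightarrow> poly g1 z = 0 \<and> poly g2 z = 0"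
proof -
  have "cnj z = z"
    using assms by (simp add: complex_eq_iff)
  then have "poly (gtilde g1 g2) z = complex_of_real ((cmod (poly g1 z))\<^sup>2 + (cmod (poly g2 z))\<^sup>2)"
    by (simp only: poly_gtilde of_real_add complex_norm_square)
  then show ?thesis
    by (simp only: of_real_eq_0_iff sum_power2_eq_zero_iff norm_eq_zero)
qed

text \<open>P is the evaluation of a quaternion polynomial with left coefficients that agrees with
  g (g1 + g2 j) on the reals; P_similar is what sum_mult_power_similar_of_cplx yields for it.\<close>

locale quat_poly_factorization =
  fixes P :: "quat \<Rightarrow> quat" and g g1 g2 :: "complex poly"
  assumes P_similar: "\<And>a z. a \<noteq> 0 \<Longrightarrow> P (a * of_cplx z * inverse a) =
      cquat (qfst a * poly (g * g1) z - cnj (qsnd a) * poly (g * g2) z)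
            (qsnd a * poly (g * g1) (cnj z) + cnj (qfst a) * poly (g * g2) (cnj z)) * inverse a"
    and coprime: "gcd g1 g2 = 1"
begin

definition "Xi = {z. poly g z = 0 \<and> Im z = 0}"
definition "Lam = {z. poly g z = 0 \<and> Im z \<noteq> 0 \<and> poly g (cnj z) = 0}"
definition "Eta = {z. poly g z = 0 \<and> Im z \<noteq> 0 \<and> poly g (cnj z) \<noteq> 0}
               \<union> {z. poly (gtilde g1 g2) z = 0 \<and> poly g z \<noteq> 0 \<and> poly g (cnj z) \<noteq> 0}"

lemma P_similar_eq_0_iff:
  assumes "a \<noteq> 0"
  shows "P (a * of_cplx z * inverse a) = 0 \<longleftrightarrow>
    poly g z * (qfst a * poly g1 z - cnj (qsnd a) * poly g2 z) = 0 \<and>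
    poly g (cnj z) * (qsnd a * poly g1 (cnj z) + cnj (qfst a) * poly g2 (cnj z)) = 0"
proof -
  have "qfst a * poly (g * g1) z - cnj (qsnd a) * poly (g * g2) z =
      poly g z * (qfst a * poly g1 z - cnj (qsnd a) * poly g2 z)"
    "qsnd a * poly (g * g1) (cnj z) + cnj (qfst a) * poly (g * g2) (cnj z) =
      poly g (cnj z) * (qsnd a * poly g1 (cnj z) + cnj (qfst a) * poly g2 (cnj z))"
    by (simp_all add: algebra_simps)
  then show ?thesis
    using assms by (simp only: P_similar mult_eq_0_iff inverse_nonzero_iff_nonzero cquat_eq_0_iff
        simp_thms)
qed

lemma P_of_real_eq_0_iff: "P (of_cplx (of_real r)) = 0 \<longleftrightarrow> poly g (of_real r) = 0"
proof -
  have "P (of_cplx (of_real r)) = 0 \<longleftrightarrow>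
      poly g (of_real r) * poly g1 (of_real r) = 0 \<and> poly g (of_real r) * poly g2 (of_real r) = 0"
    using P_similar_eq_0_iff[of 1 "of_real r"] by simp
  then show ?thesis
    using coprime_poly_no_common_root[OF coprime] by auto
qed

lemma P_qclass_eq_0:
  assumes "poly g l = 0" "poly g (cnj l) = 0" "x \<in> qclass (of_cplx l)"
  shows "P x = 0"
  using assms P_similar_eq_0_iff by (auto simp: mem_qclass_iff)

lemma omega_conjugator_nonzero: "omega_conjugator g1 g2 \<eta> \<noteq> 0"
  using coprime_poly_no_common_root[OF coprime] by (simp add: omega_conjugator_eq_0_iff)

lemma P_omega_eq_0_iff: "P (omega g1 g2 \<eta>) = 0 \<longleftrightarrow> poly g \<eta> = 0 \<or> poly (gtilde g1 g2) \<eta> = 0"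
  unfolding omega_similar[OF omega_conjugator_nonzero] P_similar_eq_0_iff[OF omega_conjugator_nonzero]
  by (simp add: omega_conjugator_def poly_gtilde algebra_simps) (simp flip: distrib_left)

lemma similar_root_eq_omega:
  assumes "P x = 0" and "x \<in> qclass (of_cplx z)" and "poly g (cnj z) \<noteq> 0"
  shows "x = omega g1 g2 z"
proof -
  define b where "b = omega_conjugator g1 g2 z"
  obtain a where "a \<noteq> 0" and x: "x = a * of_cplx z * inverse a"
    using assms(2) by (auto simp: mem_qclass_iff)
  then have "qsnd a * poly g1 (cnj z) + cnj (qfst a) * poly g2 (cnj z) = 0"
    using assms(1,3) P_similar_eq_0_iff by simp
  then obtain \<mu> where "cquat (qfst a) (qsnd a) = b * of_cplx \<mu>"
    unfolding b_def omega_conjugator_def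
    using coprime_poly_no_common_root[OF coprime] by (metis cquat_eq_conjugator_mult_of_cplx)
  then have a: "a = b * of_cplx \<mu>"
    by (simp add: cquat_qfst_qsnd)
  then have "of_cplx \<mu> \<noteq> 0"
    using \<open>a \<noteq> 0\<close> by auto
  then have "x = b * (of_cplx \<mu> * of_cplx z * inverse (of_cplx \<mu>)) * inverse b"
    using omega_conjugator_nonzero by (simp add: x a b_def nonzero_inverse_mult_distrib mult.assoc)
  also have "of_cplx \<mu> * of_cplx z * inverse (of_cplx \<mu>) = of_cplx z"
    using \<open>of_cplx \<mu> \<noteq> 0\<close> by (metis of_cplx_mult_commute mult.assoc mult_1_right right_inverse)
  finally show ?thesis
    by (simp add: b_def omega_similar[OF omega_conjugator_nonzero])
qed

lemma omega_mem_qclass: "omega g1 g2 \<eta> \<in> qclass (of_cplx \<eta>)"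
  using omega_similar[OF omega_conjugator_nonzero] omega_conjugator_nonzero
  by (auto simp: mem_qclass_iff)

lemma Eta_nonreal: "\<eta> \<in> Eta \<Longrightarrow> Im \<eta> \<noteq> 0"
  using poly_gtilde_real_eq_0_iff coprime_poly_no_common_root[OF coprime] by (auto simp: Eta_def)

lemma similar_root_mem_omega_Eta:
  assumes "P x = 0" "x \<in> qclass (of_cplx w)" "Im w \<noteq> 0" "poly g (cnj w) \<noteq> 0"
  shows "x \<in> omega g1 g2 ` Eta"
proof -
  have "x = omega g1 g2 w"
    using assms similar_root_eq_omega by blast
  then have "w \<in> Eta"
    using assms P_omega_eq_0_iff by (auto simp: Eta_def)
  with \<open>x = omega g1 g2 w\<close> show ?thesis
    by blast
qed

lemma zeros_subset: "{x. P x = 0} \<subseteq> of_cplx ` Xi \<union> omega g1 g2 ` Eta \<union> (\<Union>l\<in>Lam. qclass (of_cplx l))"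
proof
  fix x assume "x \<in> {x. P x = 0}"
  then have "P x = 0"
    by simp
  obtain z where z: "x \<in> qclass (of_cplx z)"
    using ex_qclass_of_cplx by blast
  consider "Im z = 0" | "Im z \<noteq> 0" "poly g z = 0" "poly g (cnj z) = 0"
    | "Im z \<noteq> 0" "poly g (cnj z) \<noteq> 0" | "Im z \<noteq> 0" "poly g (cnj (cnj z)) \<noteq> 0"
    by fastforce
  then show "x \<in> of_cplx ` Xi \<union> omega g1 g2 ` Eta \<union> (\<Union>l\<in>Lam. qclass (of_cplx l))"
  proof cases
    case 1
    then have z_real: "z = of_real (Re z)"
      by (simp add: complex_eq_iff)
    then have "x = of_cplx z"
      using z qclass_of_real by (metis singletonD)
    moreover have "poly g z = 0"
      using \<open>P x = 0\<close> calculation z_real P_of_real_eq_0_iff by metis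
    ultimately show ?thesis
      using 1 by (auto simp: Xi_def)
  next
    case 2
    then show ?thesis
      using z by (auto simp: Lam_def)
  next
    case 3
    then show ?thesis
      using similar_root_mem_omega_Eta[OF \<open>P x = 0\<close> z] by blast
  next
    case 4
    then show ?thesis
      using similar_root_mem_omega_Eta[OF \<open>P x = 0\<close>, of "cnj z"] z qclass_of_cplx_cnj by auto
  qed
qed

lemma zeros_supset: "of_cplx ` Xi \<union> omega g1 g2 ` Eta \<union> (\<Union>l\<in>Lam. qclass (of_cplx l)) \<subseteq> {x. P x = 0}"
proof -
  have "P (of_cplx z) = 0" if "z \<in> Xi" for z
    using that P_of_real_eq_0_iff[of "Re z"] by (simp add: Xi_def complex_is_Real_iff)
  moreover have "P (omega g1 g2 \<eta>) = 0" if "\<eta> \<in> Eta" for \<eta>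
    using that by (auto simp: P_omega_eq_0_iff Eta_def)
  moreover have "P x = 0" if "l \<in> Lam" "x \<in> qclass (of_cplx l)" for l x
    using that P_qclass_eq_0 by (auto simp: Lam_def)
  ultimately show ?thesis
    by blast
qed

lemma zero_set: "{x. P x = 0} = of_cplx ` Xi \<union> omega g1 g2 ` Eta \<union> (\<Union>l\<in>Lam. qclass (of_cplx l))"
  using zeros_subset zeros_supset by (rule subset_antisym)

lemma zero_parts_disjoint:
  "of_cplx ` Xi \<inter> omega g1 g2 ` Eta = {}"
  "of_cplx ` Xi \<inter> (\<Union>l\<in>Lam. qclass (of_cplx l)) = {}"
  "omega g1 g2 ` Eta \<inter> (\<Union>l\<in>Lam. qclass (of_cplx l)) = {}"
proof -
  have "Im \<eta> = 0" if "of_cplx z = omega g1 g2 \<eta>" "Im z = 0" for z \<eta>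
    using qclass_of_cplx_meet[of z \<eta>] that self_mem_qclass omega_mem_qclass by force
  then show "of_cplx ` Xi \<inter> omega g1 g2 ` Eta = {}"
    using Eta_nonreal by (auto simp: Xi_def)
  have "Im l = 0" if "of_cplx z \<in> qclass (of_cplx l)" "Im z = 0" for z l
    using qclass_of_cplx_meet[of l z] that self_mem_qclass by force
  then show "of_cplx ` Xi \<inter> (\<Union>l\<in>Lam. qclass (of_cplx l)) = {}"
    by (auto simp: Xi_def Lam_def)
  have "\<eta> = l \<or> \<eta> = cnj l" if "omega g1 g2 \<eta> \<in> qclass (of_cplx l)" for \<eta> l
    using qclass_of_cplx_meet[of l \<eta>] that omega_mem_qclass by blast
  then show "omega g1 g2 ` Eta \<inter> (\<Union>l\<in>Lam. qclass (of_cplx l)) = {}"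
    by (fastforce simp: Eta_def Lam_def)
qed

end

theorem theorem4:
  fixes n :: nat and pc :: "nat \<Rightarrow> quat" and d0 :: real
    and g g1 g2 :: "complex poly"
  assumes n_pos: "n \<ge> 1"
    and lead: "pc n \<noteq> 0"
    and d0: "d0 \<in> {0, 1}"
    and fac1: "(\<Sum>i=1..n. monom (qfst (pc i)) i) + [:complex_of_real d0:] = g * g1"
    and fac2: "(\<Sum>i=1..n. monom (qsnd (pc i)) i) = g * g2"
    and cop: "gcd g1 g2 = 1"
  shows
   "(let P = (\<lambda>x::quat. (\<Sum>i=1..n. pc i * x ^ i) + of_cplx (complex_of_real d0));
         gt = g1 * pconj g1 + g2 * pconj g2;
         Xi = {z. poly g z = 0 \<and> Im z = 0};
         Lam = {z. poly g z = 0 \<and> Im z \<noteq> 0 \<and> poly g (cnj z) = 0};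
         Eta = {z. poly g z = 0 \<and> Im z \<noteq> 0 \<and> poly g (cnj z) \<noteq> 0}
               \<union> {z. poly gt z = 0 \<and> poly g z \<noteq> 0 \<and> poly g (cnj z) \<noteq> 0};
         R = of_cplx ` Xi;
         Om = omega g1 g2 ` Eta;
         C = (\<Union>l\<in>Lam. qclass (of_cplx l))
     in {x. P x = 0} = R \<union> Om \<union> C
        \<and> R \<inter> Om = {} \<and> R \<inter> C = {} \<and> Om \<inter> C = {}
        \<and> (\<forall>l\<in>Lam. \<forall>m\<in>Lam. qclass (of_cplx l) \<inter> qclass (of_cplx m) \<noteq> {}
                 \<longrightarrow> m = l \<or> m = cnj l))"
proof -
  \<comment> \<open>n_pos, lead and d0 are not needed: the description holds for any constant term.\<close>
  define c where "c i = (if i = 0 then of_cplx (of_real d0) else pc i)" for i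
  have sum_shift: "(\<Sum>i=1..n. f i) + f 0 = (\<Sum>i\<in>{0..n}. f i)" for f :: "nat \<Rightarrow> 'a::comm_monoid_add"
    by (simp add: sum.atLeast_Suc_atMost add.commute)
  have P_eq: "(\<Sum>i=1..n. pc i * x ^ i) + of_cplx (of_real d0) = (\<Sum>i\<in>{0..n}. c i * x ^ i)" for x
    using sum_shift[of "\<lambda>i. c i * x ^ i"] by (simp add: c_def)
  have F1: "poly (g * g1) z = (\<Sum>i\<in>{0..n}. qfst (c i) * z ^ i)" for z
    using sum_shift[of "\<lambda>i. qfst (c i) * z ^ i"] arg_cong[OF fac1, of "\<lambda>p. poly p z"]
    by (simp add: c_def poly_sum poly_monom of_cplx_eq_cquat)
  have F2: "poly (g * g2) z = (\<Sum>i\<in>{0..n}. qsnd (c i) * z ^ i)" for z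
    using sum_shift[of "\<lambda>i. qsnd (c i) * z ^ i"] arg_cong[OF fac2, of "\<lambda>p. poly p z"]
    by (simp add: c_def poly_sum poly_monom of_cplx_eq_cquat)
  interpret quat_poly_factorization "\<lambda>x. (\<Sum>i=1..n. pc i * x ^ i) + of_cplx (of_real d0)" g g1 g2
    by unfold_locales (simp_all only: P_eq F1 F2 cop, rule sum_mult_power_similar_of_cplx)
  have "\<forall>l\<in>Lam. \<forall>m\<in>Lam. qclass (of_cplx l) \<inter> qclass (of_cplx m) \<noteq> {} \<longrightarrow> m = l \<or> m = cnj l"
    using qclass_of_cplx_meet by blast
  with zero_set zero_parts_disjoint show ?thesis
    unfolding Let_def Xi_def Lam_def Eta_def gtilde_def by (intro conjI) simp_all
qed

end
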